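(* Let $I\subseteq\mathbb{R}$ be an interval, let $f:I\to\mathbb{R}$ be differentiable on the interior $I^{\circ}$ of $I$, let $a,b\in I^{\circ}$ with $a<b$, assume $f'\in L[a,b]$, and let $\alpha,\lambda\in[0,1]$. Suppose that $|f'|^{q}$ is $s$-convex on $[a,b]$ for some fixed $s\in(0,1]$ and some $q\geq 1$. Define $$I_f(\lambda,\alpha,a,b)=\lambda\big(\alpha f(a)+(1-\alpha)f(b)\big)+(1-\lambda)f(\alpha a+(1-\alpha)b)-\frac{1}{b-a}\int_a^b f(x)\,dx,$$ $$\gamma_1(\alpha,\lambda)=(1-\alpha)\Big[\alpha\lambda-\frac{1-\alpha}{2}\Big],\qquad \gamma_2(\alpha,\lambda)=(\alpha\lambda)^2-\gamma_1(\alpha,\lambda),$$ $$c_1(\alpha,\lambda,s)=(\alpha\lambda)^{s+2}\frac{2}{(s+1)(s+2)}-\alpha\lambda\frac{(1-\alpha)^{s+1}}{s+1}+\frac{(1-\alpha)^{s+2}}{s+2},$$ $$c_2(\alpha,\lambda,s)=(1-\alpha\lambda)^{s+2}\frac{2}{(s+1)(s+2)}-\frac{(1-\alpha\lambda)(1+\alpha^{s+1})}{s+1}+\frac{1+\alpha^{s+2}}{s+2},$$ $$c_3(\alpha,\lambda,s)=\alpha\lambda\frac{(1-\alpha)^{s+1}}{s+1}-\frac{(1-\alpha)^{s+2}}{s+2},\qquad c_4(\alpha,\lambda,s)=\frac{(\alpha\lambda-1)(1-\alpha^{s+1})}{s+1}+\frac{1-\alpha^{s+2}}{s+2}.$$ Then: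 (i) if $\alpha\lambda\leq 1-\alpha\leq 1-\lambda(1-\alpha)$, $$|I_f(\lambda,\alpha,a,b)|\leq (b-a)\Big[\gamma_2^{1-\frac1q}(\alpha,\lambda)\big(c_1(\alpha,\lambda,s)|f'(b)|^q+c_2(\alpha,\lambda,s)|f'(a)|^q\big)^{\frac1q}+\gamma_2^{1-\frac1q}(1-\alpha,\lambda)\big(c_2(1-\alpha,\lambda,s)|f'(b)|^q+c_1(1-\alpha,\lambda,s)|f'(a)|^q\big)^{\frac1q}\Big];$$ (ii) if $\alpha\lambda\leq 1-\lambda(1-\alpha)\leq 1-\alpha$, $$|I_f(\lambda,\alpha,a,b)|\leq (b-a)\Big[\gamma_2^{1-\frac1q}(\alpha,\lambda)\big(c_1(\alpha,\lambda,s)|f'(b)|^q+c_2(\alpha,\lambda,s)|f'(a)|^q\big)^{\frac1q}+\gamma_1^{1-\frac1q}(1-\alpha,\lambda)\big(c_4(1-\alpha,\lambda,s)|f'(b)|^q+c_3(1-\alpha,\lambda,s)|f'(a)|^q\big)^{\frac1q}\Big];$$ (iii) if $1-\alpha\leq\alpha\lambda\leq 1-\lambda(1-\alpha)$, $$|I_f(\lambda,\alpha,a,b)|\leq (b-a)\Big[\gamma_1^{1-\frac1q}(\alpha,\lambda)\big(c_3(\alpha,\lambda,s)|f'(b)|^q+c_4(\alpha,\lambda,s)|f'(a)|^q\big)^{\frac1q}+\gamma_2^{1-\frac1q}(1-\alpha,\lambda)\big(c_2(1-\alpha,\lambda,s)|f'(b)|^q+c_1(1-\alpha,\lambda,s)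|f'(a)|^q\big)^{\frac1q}\Big].$$
   Context: For a fixed $s\in(0,1]$, a function $g:[a,b]\to[0,\infty)$ is called $s$-convex (in the second sense) on $[a,b]$ if $g(\theta x+(1-\theta)y)\leq \theta^{s}g(x)+(1-\theta)^{s}g(y)$ for all $x,y\in[a,b]$ and all $\theta\in[0,1]$. *)

theory Defs
  imports "HOL-Analysis.Analysis"
begin

definition s_convex_on :: "real \<Rightarrow> (real \<Rightarrow> real) \<Rightarrow> real set \<Rightarrow> bool" where
  "s_convex_on s g A \<longleftrightarrow> (\<forall>x\<in>A. 0 \<le> g x) \<and>
     (\<forall>x\<in>A. \<forall>y\<in>A. \<forall>\<theta>\<in>{0..1}.
        g (\<theta> * x + (1 - \<theta>) * y) \<le> \<theta> powr s * g x + (1 - \<theta>) powr s * g y)"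

text \<open>Real power with the usual convention t^0 = 1 (Isabelle's powr has 0 powr 0 = 0).\<close>
definition rpow :: "real \<Rightarrow> real \<Rightarrow> real" where
  "rpow x e = (if e = 0 then 1 else x powr e)"

definition If_fun :: "(real \<Rightarrow> real) \<Rightarrow> real \<Rightarrow> real \<Rightarrow> real \<Rightarrow> real \<Rightarrow> real" where
  "If_fun f lam \<alpha> a b = lam * (\<alpha> * f a + (1 - \<alpha>) * f b) + (1 - lam) * f (\<alpha> * a + (1 - \<alpha>) * b)
      - integral {a..b} f / (b - a)"

definition gamma1 :: "real \<Rightarrow> real \<Rightarrow> real" where
  "gamma1 \<alpha> lam = (1 - \<alpha>) * (\<alpha> * lam - (1 - \<alpha>) / 2)"

definition gamma2 :: "real \<Rightarrow> real \<Rightarrow> real" where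
  "gamma2 \<alpha> lam = (\<alpha> * lam)\<^sup>2 - gamma1 \<alpha> lam"

definition c1 :: "real \<Rightarrow> real \<Rightarrow> real \<Rightarrow> real" where
  "c1 \<alpha> lam s = (\<alpha> * lam) powr (s + 2) * (2 / ((s + 1) * (s + 2)))
     - \<alpha> * lam * ((1 - \<alpha>) powr (s + 1) / (s + 1)) + (1 - \<alpha>) powr (s + 2) / (s + 2)"

definition c2 :: "real \<Rightarrow> real \<Rightarrow> real \<Rightarrow> real" where
  "c2 \<alpha> lam s = (1 - \<alpha> * lam) powr (s + 2) * (2 / ((s + 1) * (s + 2)))
     - (1 - \<alpha> * lam) * (1 + \<alpha> powr (s + 1)) / (s + 1) + (1 + \<alpha> powr (s + 2)) / (s + 2)"

definition c3 :: "real \<Rightarrow> real \<Rightarrow> real \<Rightarrow> real" where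
  "c3 \<alpha> lam s = \<alpha> * lam * ((1 - \<alpha>) powr (s + 1) / (s + 1)) - (1 - \<alpha>) powr (s + 2) / (s + 2)"

definition c4 :: "real \<Rightarrow> real \<Rightarrow> real \<Rightarrow> real" where
  "c4 \<alpha> lam s = (\<alpha> * lam - 1) * (1 - \<alpha> powr (s + 1)) / (s + 1) + (1 - \<alpha> powr (s + 2)) / (s + 2)"

end

theory Submission
  imports Defs
begin

text \<open>
  With \<open>c = \<alpha>a + (1-\<alpha>)b\<close>, \<open>A = a + \<alpha>\<lambda>(b-a)\<close> and \<open>B = b - \<lambda>(1-\<alpha>)(b-a)\<close>,
  integration by parts gives
  \<open>(b-a) I\<^sub>f = \<integral>\<^sub>a\<^sup>c (x-A) f'(x) dx - \<integral>\<^sub>c\<^sup>b (B-x) f'(x) dx\<close>.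
  Each piece is estimated by the power-mean inequality with weight \<open>|x-A|\<close>
  (resp. \<open>|x-B|\<close>), followed by the \<open>s\<close>-convexity bound
  \<open>|f'(x)|\<^sup>q \<le> t\<^sup>s|f'(b)|\<^sup>q + (1-t)\<^sup>s|f'(a)|\<^sup>q\<close>, \<open>t = (x-a)/(b-a)\<close>.
  The weighted moments of \<open>t\<^sup>s\<close>, \<open>(1-t)\<^sup>s\<close> and \<open>1\<close> are the constants
  \<open>c\<^sub>1, \<dots>, c\<^sub>4\<close>, \<open>\<gamma>\<^sub>1\<close>, \<open>\<gamma>\<^sub>2\<close>; which of them occur depends on whether \<open>A\<close> lies inside
  \<open>[a,c]\<close> (and \<open>B\<close> inside \<open>[c,b]\<close>). The right piece reduces to the left one by
  the reflection \<open>x \<mapsto> -x\<close>.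
\<close>

lemma Youngs_inequality_scaled:
  fixes u K W q :: real
  assumes "0 \<le> u" "0 < K" "0 < W" "1 \<le> q"
  shows "u \<le> K powr (1/q) * W powr (1-1/q) * ((1/q) * (u powr q / K) + (1-1/q) / W)"
proof (cases "u = 0")
  case True
  have "0 \<le> (1/q) * (u powr q / K) + (1-1/q) / W"
    using assms by (intro add_nonneg_nonneg mult_nonneg_nonneg divide_nonneg_pos) (auto simp: field_simps)
  then have "0 \<le> K powr (1/q) * W powr (1-1/q) * ((1/q) * (u powr q / K) + (1-1/q) / W)"
    by simp
  then show ?thesis
    using True by simp
next
  case False
  then have u: "u > 0"
    using assms by simp
  have young: "(u powr q / K) powr (1/q) * (1/W) powr (1-1/q) \<le> (1/q) * (u powr q / K) + (1-1/q) * (1/W)"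
    by (rule Youngs_inequality_0) (use assms u in \<open>auto simp: field_simps\<close>)
  have "(u powr q / K) powr (1/q) = u / K powr (1/q)" "(1/W) powr (1-1/q) = 1 / W powr (1-1/q)"
    using assms u by (simp_all add: powr_divide powr_powr)
  moreover have "K powr (1/q) > 0" "W powr (1-1/q) > 0"
    using assms by auto
  ultimately show ?thesis
    using mult_left_mono[OF young, of "K powr (1/q) * W powr (1-1/q)"] by (simp add: field_simps)
qed

lemma integral_weighted_power_mean_le_pos:
  fixes w u :: "real \<Rightarrow> real"
  assumes wu: "(\<lambda>x. w x * u x) integrable_on S" and wuq: "(\<lambda>x. w x * u x powr q) integrable_on S"
    and w: "w integrable_on S" and nonneg: "\<And>x. x \<in> S \<Longrightarrow> 0 \<le> w x \<and> 0 \<le> u x"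
    and q: "1 \<le> q" and W: "0 < integral S w"
    and C: "integral S (\<lambda>x. w x * u x powr q) \<le> C" "0 < C"
  shows "integral S (\<lambda>x. w x * u x) \<le> integral S w powr (1-1/q) * C powr (1/q)"
proof -
  define W where "W = integral S w"
  define Z where "Z = W powr (1-1/q) * C powr (1/q)"
  have "w x * u x \<le> Z * ((1/q)/C) * (w x * u x powr q) + Z * ((1-1/q)/W) * w x" if "x \<in> S" for x
  proof -
    have "u x \<le> Z * ((1/q) * (u x powr q / C) + (1-1/q) / W)"
      unfolding Z_def using Youngs_inequality_scaled[of "u x" C W q] nonneg[OF that] C W q W_def
      by (simp add: mult.commute)
    then have "w x * u x \<le> w x * (Z * ((1/q) * (u x powr q / C) + (1-1/q) / W))"
      using nonneg[OF that] by (intro mult_left_mono) auto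
    then show ?thesis
      by (simp add: algebra_simps)
  qed
  moreover have wuq': "(\<lambda>x. Z * ((1/q)/C) * (w x * u x powr q)) integrable_on S"
    and w': "(\<lambda>x. Z * ((1-1/q)/W) * w x) integrable_on S"
    by (intro integrable_on_mult_right wuq w)+
  ultimately have "integral S (\<lambda>x. w x * u x)
      \<le> integral S (\<lambda>x. Z * ((1/q)/C) * (w x * u x powr q) + Z * ((1-1/q)/W) * w x)"
    by (intro integral_le wu integrable_add)
  also have "\<dots> = Z * ((1/q)/C) * integral S (\<lambda>x. w x * u x powr q) + Z * ((1-1/q)/W) * W"
    by (simp only: integral_add[OF wuq' w'] integral_mult_right) (simp only: W_def)
  also have "\<dots> \<le> Z * ((1/q)/C) * C + Z * ((1-1/q)/W) * W"
    using C q unfolding Z_def by (intro add_right_mono mult_left_mono) auto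
  also have "\<dots> = Z"
    using C W W_def q by (simp add: field_simps)
  finally show ?thesis
    unfolding Z_def W_def .
qed

lemma integral_weighted_power_mean_le:
  fixes w u :: "real \<Rightarrow> real"
  assumes wu: "(\<lambda>x. w x * u x) integrable_on S" and wuq: "(\<lambda>x. w x * u x powr q) integrable_on S"
    and w: "w integrable_on S" and nonneg: "\<And>x. x \<in> S \<Longrightarrow> 0 \<le> w x \<and> 0 \<le> u x"
    and q: "1 \<le> q" and W: "0 < integral S w"
    and C: "integral S (\<lambda>x. w x * u x powr q) \<le> C"
  shows "integral S (\<lambda>x. w x * u x) \<le> integral S w powr (1-1/q) * C powr (1/q)"
proof -
  \<comment> \<open>Young's inequality needs \<open>C > 0\<close>; the case \<open>C = 0\<close> follows by letting \<open>C + e \<rightarrow> C\<close>.\<close>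
  have "0 \<le> integral S (\<lambda>x. w x * u x powr q)"
    using nonneg by (intro integral_nonneg wuq) auto
  then have "0 \<le> C"
    using C by simp
  have "((\<lambda>e. integral S w powr (1-1/q) * (C + e) powr (1/q))
      \<longlongrightarrow> integral S w powr (1-1/q) * (C + 0) powr (1/q)) (at_right 0)"
    using q \<open>0 \<le> C\<close> by (intro tendsto_intros tendsto_powr2) (auto intro: eventually_at_rightI[of 0 1])
  moreover have "\<forall>\<^sub>F e in at_right 0.
      integral S (\<lambda>x. w x * u x) \<le> integral S w powr (1-1/q) * (C + e) powr (1/q)"
    using \<open>0 \<le> C\<close> C
    by (intro eventually_at_rightI[of 0 1] integral_weighted_power_mean_le_pos[OF wu wuq w nonneg q W]) auto
  ultimately show ?thesis
    by (simp add: tendsto_lowerbound)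
qed

lemma abs_integral_linear_times_power_mean_le:
  fixes g :: "real \<Rightarrow> real"
  assumes g: "g absolutely_integrable_on {u..v}" and "1 \<le> q"
    and int_q: "(\<lambda>x. \<bar>x - A\<bar> * \<bar>g x\<bar> powr q) integrable_on {u..v}"
    and W: "((\<lambda>x. \<bar>x - A\<bar>) has_integral V) {u..v}" "0 < V"
    and J: "integral {u..v} (\<lambda>x. \<bar>x - A\<bar> * \<bar>g x\<bar> powr q) \<le> C"
  shows "\<bar>integral {u..v} (\<lambda>x. (x - A) * g x)\<bar> \<le> V powr (1 - 1/q) * C powr (1/q)"
proof -
  have "(\<lambda>x. (x - A) * g x) absolutely_integrable_on {u..v}"
    by (intro absolutely_integrable_bounded_measurable_product_real g
        continuous_imp_measurable_on_sets_lebesgue compact_imp_bounded compact_continuous_image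
        continuous_intros) auto
  then have int: "(\<lambda>x. (x - A) * g x) integrable_on {u..v}"
    and int_abs: "(\<lambda>x. \<bar>x - A\<bar> * \<bar>g x\<bar>) integrable_on {u..v}"
    by (simp_all add: absolutely_integrable_on_def abs_mult)
  have "\<bar>integral {u..v} (\<lambda>x. (x - A) * g x)\<bar> \<le> integral {u..v} (\<lambda>x. \<bar>x - A\<bar> * \<bar>g x\<bar>)"
    using integral_norm_bound_integral[OF int int_abs] by (simp add: abs_mult)
  also have "\<dots> \<le> V powr (1 - 1/q) * C powr (1/q)"
    using integral_weighted_power_mean_le[OF int_abs int_q _ _ \<open>1 \<le> q\<close> _ J] W
    by (auto simp: integrable_on_def integral_unique)
  finally show ?thesis .
qed

lemma s_convex_on_le_endpoints:
  assumes "s_convex_on s g {a..b}" "a < b" "x \<in> {a..b}"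
  shows "g x \<le> ((x - a) / (b - a)) powr s * g b + ((b - x) / (b - a)) powr s * g a"
proof -
  define t where "t = (x - a) / (b - a)"
  have t: "t \<in> {0..1}" "1 - t = (b - x) / (b - a)"
    using assms(2,3) by (auto simp: t_def field_simps)
  have "t * b + (1 - t) * a = a + t * (b - a)"
    by (simp add: algebra_simps)
  also have "\<dots> = x"
    using assms(2) by (simp add: t_def)
  finally have x: "t * b + (1 - t) * a = x" .
  have "g (t * b + (1 - t) * a) \<le> t powr s * g b + (1 - t) powr s * g a"
    using assms(1,2) t(1) unfolding s_convex_on_def by auto
  then show ?thesis
    unfolding x t_def[symmetric] t(2)[symmetric] .
qed

lemma convex_combination_between:
  fixes a b \<beta> :: real
  assumes "a \<le> b" "0 \<le> \<beta>" "\<beta> \<le> 1"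
  shows "a \<le> \<beta> * a + (1 - \<beta>) * b" "\<beta> * a + (1 - \<beta>) * b \<le> b"
proof -
  have "0 \<le> (1 - \<beta>) * (b - a)" "0 \<le> \<beta> * (b - a)"
    using assms by auto
  then show "a \<le> \<beta> * a + (1 - \<beta>) * b" "\<beta> * a + (1 - \<beta>) * b \<le> b"
    by (auto simp: algebra_simps)
qed

lemma integral_linear_times_deriv:
  fixes f f' :: "real \<Rightarrow> real"
  assumes "u \<le> v" and der: "\<And>x. x \<in> {u..v} \<Longrightarrow> (f has_real_derivative f' x) (at x)"
  shows "integral {u..v} (\<lambda>x. (x - K) * f' x) = (v - K) * f v - (u - K) * f u - integral {u..v} f"
proof -
  have "continuous_on {u..v} f"
    using der by (intro continuous_at_imp_continuous_on) (blast intro: DERIV_isCont)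
  then have f: "(f has_integral integral {u..v} f) {u..v}"
    by (intro integrable_integral integrable_continuous_interval)
  have "((\<lambda>x. f x + (x - K) * f' x) has_integral (v - K) * f v - (u - K) * f u) {u..v}"
  proof (rule fundamental_theorem_of_calculus_interior[OF \<open>u \<le> v\<close>])
    show "continuous_on {u..v} (\<lambda>x. (x - K) * f x)"
      using \<open>continuous_on {u..v} f\<close> by (intro continuous_intros)
    fix x
    assume "x \<in> {u<..<v}"
    then have "(f has_real_derivative f' x) (at x)"
      using der by auto
    then show "((\<lambda>x. (x - K) * f x) has_vector_derivative f x + (x - K) * f' x) (at x)"
      by (auto intro!: derivative_eq_intros simp: has_real_derivative_iff_has_vector_derivative[symmetric])
  qed
  from has_integral_diff[OF this f] show ?thesis
    by (simp add: integral_unique)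
qed

lemma If_fun_eq_pieces:
  fixes f f' :: "real \<Rightarrow> real"
  assumes "a < b" "0 \<le> \<alpha>" "\<alpha> \<le> 1" "{a..b} \<subseteq> S"
    and "\<forall>x\<in>S. (f has_real_derivative f' x) (at x)"
  shows "If_fun f lam \<alpha> a b =
    (integral {a..\<alpha> * a + (1 - \<alpha>) * b} (\<lambda>x. (x - (a + \<alpha> * lam * (b - a))) * f' x)
     - integral {\<alpha> * a + (1 - \<alpha>) * b..b} (\<lambda>x. (b - lam * (1 - \<alpha>) * (b - a) - x) * f' x)) / (b - a)"
proof -
  have der: "\<And>x. x \<in> {a..b} \<Longrightarrow> (f has_real_derivative f' x) (at x)"
    using assms(4,5) by auto
  define c where "c = \<alpha> * a + (1 - \<alpha>) * b"
  define A where "A = a + \<alpha> * lam * (b - a)"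
  define B where "B = b - lam * (1 - \<alpha>) * (b - a)"
  have "a \<le> c" "c \<le> b"
    unfolding c_def using convex_combination_between assms by auto
  have "continuous_on {a..b} f"
    using der by (intro continuous_at_imp_continuous_on) (blast intro: DERIV_isCont)
  then have "integral {a..c} f + integral {c..b} f = integral {a..b} f"
    using \<open>a \<le> c\<close> \<open>c \<le> b\<close> by (intro Henstock_Kurzweil_Integration.integral_combine integrable_continuous_interval)
  moreover have "integral {a..c} (\<lambda>x. (x - A) * f' x) = (c - A) * f c - (a - A) * f a - integral {a..c} f"
    using \<open>c \<le> b\<close> by (intro integral_linear_times_deriv \<open>a \<le> c\<close> der) auto
  moreover have "integral {c..b} (\<lambda>x. (x - B) * f' x) = (b - B) * f b - (c - B) * f c - integral {c..b} f"
    using \<open>a \<le> c\<close> by (intro integral_linear_times_deriv \<open>c \<le> b\<close> der) auto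
  moreover have "integral {c..b} (\<lambda>x. (B - x) * f' x) = - integral {c..b} (\<lambda>x. (x - B) * f' x)"
    by (simp flip: integral_neg add: algebra_simps)
  ultimately show ?thesis
    using \<open>a < b\<close> unfolding If_fun_def c_def[symmetric] A_def[symmetric] B_def[symmetric]
    by (simp add: A_def B_def c_def field_simps)
qed

lemma abs_diff_divide_le:
  fixes L I J X Y :: real
  assumes "0 < L" "\<bar>I\<bar> \<le> L\<^sup>2 * X" "\<bar>J\<bar> \<le> L\<^sup>2 * Y"
  shows "\<bar>(I - J) / L\<bar> \<le> L * (X + Y)"
proof -
  have "\<bar>(I - J) / L\<bar> \<le> (\<bar>I\<bar> + \<bar>J\<bar>) / L"
    using assms by (simp add: divide_right_mono)
  also have "\<dots> \<le> (L\<^sup>2 * X + L\<^sup>2 * Y) / L"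
    using assms by (intro divide_right_mono add_mono) auto
  also have "\<dots> = L * (X + Y)"
    using assms by (simp add: power2_eq_square field_simps)
  finally show ?thesis .
qed

definition powr_moment :: "real \<Rightarrow> real \<Rightarrow> real \<Rightarrow> real" where
  "powr_moment s \<mu> t = t powr (s + 2) / (s + 2) - \<mu> * t powr (s + 1) / (s + 1)"

lemma has_real_derivative_powr_moment:
  assumes "0 < t" "0 < s"
  shows "(powr_moment s \<mu> has_real_derivative (t - \<mu>) * t powr s) (at t)"
proof -
  have "(powr_moment s \<mu> has_real_derivative
      (s + 2) * t powr (s + 1) / (s + 2) - \<mu> * ((s + 1) * t powr s) / (s + 1)) (at t)"
    unfolding powr_moment_def using assms
    by (auto intro!: derivative_eq_intros simp: add.commute[of 1] add.commute[of 2])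
  moreover have "s + 1 \<noteq> 0" "s + 2 \<noteq> 0" "t powr (s + 1) = t * t powr s"
    using assms powr_mult_base[of t s] by (simp_all add: add.commute)
  ultimately show ?thesis
    by (simp add: left_diff_distrib)
qed

lemma powr_moment_zero [simp]: "powr_moment s \<mu> 0 = 0"
  by (simp add: powr_moment_def)

lemma powr_moment_self:
  assumes "0 \<le> \<mu>"
  shows "powr_moment s \<mu> \<mu> = \<mu> powr (s + 2) / (s + 2) - \<mu> powr (s + 2) / (s + 1)"
proof -
  have "\<mu> * \<mu> powr (s + 1) = \<mu> powr (s + 2)"
    using assms powr_mult_base[of \<mu> "s + 1"] by (simp add: add.commute add.left_commute)
  then show ?thesis
    by (simp add: powr_moment_def)
qed

lemma two_divide_consecutive_mult:
  assumes "0 < s"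
  shows "X * (2 / ((s + 1) * (s + 2))) = - 2 * (X / (s + 2) - X / (s + 1 :: real))"
  using assms by (simp add: field_simps)

lemma c1_eq_powr_moment:
  assumes "0 \<le> \<beta> * lam" "0 < s"
  shows "c1 \<beta> lam s = powr_moment s (\<beta> * lam) 0 + powr_moment s (\<beta> * lam) (1 - \<beta>)
    - 2 * powr_moment s (\<beta> * lam) (\<beta> * lam)"
  using assms unfolding c1_def two_divide_consecutive_mult[OF \<open>0 < s\<close>]
  by (simp add: powr_moment_self) (simp add: powr_moment_def)

lemma c2_eq_powr_moment:
  assumes "\<beta> * lam \<le> 1" "0 < s"
  shows "c2 \<beta> lam s = powr_moment s (1 - \<beta> * lam) 1 + powr_moment s (1 - \<beta> * lam) \<beta>
    - 2 * powr_moment s (1 - \<beta> * lam) (1 - \<beta> * lam)"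
  using assms unfolding c2_def two_divide_consecutive_mult[OF \<open>0 < s\<close>]
  by (simp add: powr_moment_self)
    (simp add: powr_moment_def add_divide_distrib diff_divide_distrib algebra_simps)

lemma c3_eq_powr_moment:
  "c3 \<beta> lam s = powr_moment s (\<beta> * lam) 0 - powr_moment s (\<beta> * lam) (1 - \<beta>)"
  by (simp add: c3_def powr_moment_def)

lemma c4_eq_powr_moment:
  "c4 \<beta> lam s = powr_moment s (1 - \<beta> * lam) 1 - powr_moment s (1 - \<beta> * lam) \<beta>"
  by (simp add: c4_def powr_moment_def add_divide_distrib diff_divide_distrib algebra_simps)

lemma has_integral_linear_times_powr:
  assumes "a < b" "0 < s" "a \<le> u" "u \<le> v"
  shows "((\<lambda>x. (x - (a + \<mu> * (b - a))) * ((x - a) / (b - a)) powr s) has_integral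
      (b - a)\<^sup>2 * powr_moment s \<mu> ((v - a) / (b - a))
      - (b - a)\<^sup>2 * powr_moment s \<mu> ((u - a) / (b - a))) {u..v}"
proof (rule fundamental_theorem_of_calculus_interior[OF \<open>u \<le> v\<close>])
  show "continuous_on {u..v} (\<lambda>x. (b - a)\<^sup>2 * powr_moment s \<mu> ((x - a) / (b - a)))"
    unfolding powr_moment_def using assms
    by (intro continuous_intros continuous_on_powr') (auto simp: field_simps)
  fix x
  assume "x \<in> {u<..<v}"
  then have t: "0 < (x - a) / (b - a)"
    using assms by auto
  have "((\<lambda>x. (b - a)\<^sup>2 * powr_moment s \<mu> ((x - a) / (b - a))) has_real_derivative
      (b - a)\<^sup>2 * (((x - a) / (b - a) - \<mu>) * ((x - a) / (b - a)) powr s * (1 / (b - a)))) (at x)"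
  proof (intro DERIV_cmult)
    have "((\<lambda>x. (x - a) / (b - a)) has_real_derivative 1 / (b - a)) (at x)"
      using assms by (auto intro!: derivative_eq_intros)
    then show "((\<lambda>x. powr_moment s \<mu> ((x - a) / (b - a))) has_real_derivative
        ((x - a) / (b - a) - \<mu>) * ((x - a) / (b - a)) powr s * (1 / (b - a))) (at x)"
      by (rule DERIV_chain2[where g = "\<lambda>x. (x - a) / (b - a)",
          OF has_real_derivative_powr_moment[OF t \<open>0 < s\<close>]])
  qed
  moreover have "(b - a)\<^sup>2 * (((x - a) / (b - a) - \<mu>) * ((x - a) / (b - a)) powr s * (1 / (b - a)))
      = (x - (a + \<mu> * (b - a))) * ((x - a) / (b - a)) powr s"
    using assms by (simp add: power2_eq_square divide_simps)
  ultimately show "((\<lambda>x. (b - a)\<^sup>2 * powr_moment s \<mu> ((x - a) / (b - a))) has_vector_derivative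
      (x - (a + \<mu> * (b - a))) * ((x - a) / (b - a)) powr s) (at x)"
    by (simp add: has_real_derivative_iff_has_vector_derivative)
qed

lemma has_integral_linear_times_powr_reflected:
  assumes "a < b" "0 < s" "u \<le> v" "v \<le> b"
  shows "((\<lambda>x. (x - (a + \<mu> * (b - a))) * ((b - x) / (b - a)) powr s) has_integral
      (b - a)\<^sup>2 * powr_moment s (1 - \<mu>) ((b - v) / (b - a))
      - (b - a)\<^sup>2 * powr_moment s (1 - \<mu>) ((b - u) / (b - a))) {u..v}"
proof (rule fundamental_theorem_of_calculus_interior[OF \<open>u \<le> v\<close>])
  show "continuous_on {u..v} (\<lambda>x. (b - a)\<^sup>2 * powr_moment s (1 - \<mu>) ((b - x) / (b - a)))"
    unfolding powr_moment_def using assms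
    by (intro continuous_intros continuous_on_powr') (auto simp: field_simps)
  fix x
  assume "x \<in> {u<..<v}"
  then have t: "0 < (b - x) / (b - a)"
    using assms by auto
  have "((\<lambda>x. (b - a)\<^sup>2 * powr_moment s (1 - \<mu>) ((b - x) / (b - a))) has_real_derivative
      (b - a)\<^sup>2 * (((b - x) / (b - a) - (1 - \<mu>)) * ((b - x) / (b - a)) powr s * (- 1 / (b - a)))) (at x)"
  proof (intro DERIV_cmult)
    have "((\<lambda>x. (b - x) / (b - a)) has_real_derivative - 1 / (b - a)) (at x)"
      using DERIV_cdivide[where c = "b - a", OF DERIV_diff[OF DERIV_const DERIV_ident], of b x] by simp
    then show "((\<lambda>x. powr_moment s (1 - \<mu>) ((b - x) / (b - a))) has_real_derivative
        ((b - x) / (b - a) - (1 - \<mu>)) * ((b - x) / (b - a)) powr s * (- 1 / (b - a))) (at x)"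
      by (rule DERIV_chain2[where g = "\<lambda>x. (b - x) / (b - a)",
          OF has_real_derivative_powr_moment[OF t \<open>0 < s\<close>]])
  qed
  moreover have "(b - a)\<^sup>2 * (((b - x) / (b - a) - (1 - \<mu>)) * ((b - x) / (b - a)) powr s * (- 1 / (b - a)))
      = (x - (a + \<mu> * (b - a))) * ((b - x) / (b - a)) powr s"
    using assms by (simp add: power2_eq_square divide_simps) (simp add: algebra_simps)
  ultimately show "((\<lambda>x. (b - a)\<^sup>2 * powr_moment s (1 - \<mu>) ((b - x) / (b - a))) has_vector_derivative
      (x - (a + \<mu> * (b - a))) * ((b - x) / (b - a)) powr s) (at x)"
    by (simp add: has_real_derivative_iff_has_vector_derivative)
qed

lemma has_integral_linear:
  fixes u v A :: real
  assumes "u \<le> v"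
  shows "((\<lambda>x. (x - A) * 1) has_integral (v - A)\<^sup>2 / 2 - (u - A)\<^sup>2 / 2) {u..v}"
proof -
  have "((\<lambda>x. x - A) has_integral (v - A)\<^sup>2 / 2 - (u - A)\<^sup>2 / 2) {u..v}"
    by (rule fundamental_theorem_of_calculus[OF assms])
      (auto intro!: derivative_eq_intros
        simp: has_real_derivative_iff_has_vector_derivative[symmetric] power2_eq_square field_simps)
  then show ?thesis
    by simp
qed

lemma has_integral_abs_linear_times:
  fixes h G :: "real \<Rightarrow> real"
  assumes prim: "\<And>u v. a \<le> u \<Longrightarrow> u \<le> v \<Longrightarrow> v \<le> c \<Longrightarrow>
      ((\<lambda>x. (x - A) * h x) has_integral G v - G u) {u..v}"
  shows "a \<le> A \<Longrightarrow> A \<le> c \<Longrightarrow> ((\<lambda>x. \<bar>x - A\<bar> * h x) has_integral G a + G c - 2 * G A) {a..c}"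
    and "a \<le> c \<Longrightarrow> c \<le> A \<Longrightarrow> ((\<lambda>x. \<bar>x - A\<bar> * h x) has_integral G a - G c) {a..c}"
proof -
  assume "a \<le> A" "A \<le> c"
  have "((\<lambda>x. \<bar>x - A\<bar> * h x) has_integral - (G A - G a)) {a..A}"
    by (rule has_integral_eq[OF _ has_integral_neg[OF prim]]) (use \<open>a \<le> A\<close> \<open>A \<le> c\<close> in \<open>auto simp: algebra_simps\<close>)
  moreover have "((\<lambda>x. \<bar>x - A\<bar> * h x) has_integral G c - G A) {A..c}"
    by (rule has_integral_eq[OF _ prim]) (use \<open>a \<le> A\<close> \<open>A \<le> c\<close> in \<open>auto simp: algebra_simps\<close>)
  ultimately show "((\<lambda>x. \<bar>x - A\<bar> * h x) has_integral G a + G c - 2 * G A) {a..c}"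
    using has_integral_combine[OF \<open>a \<le> A\<close> \<open>A \<le> c\<close>] by fastforce
next
  assume "a \<le> c" "c \<le> A"
  have "((\<lambda>x. \<bar>x - A\<bar> * h x) has_integral - (G c - G a)) {a..c}"
    by (rule has_integral_eq[OF _ has_integral_neg[OF prim]]) (use \<open>a \<le> c\<close> \<open>c \<le> A\<close> in \<open>auto simp: algebra_simps\<close>)
  then show "((\<lambda>x. \<bar>x - A\<bar> * h x) has_integral G a - G c) {a..c}"
    by simp
qed

lemma weight_integrals_inside:
  fixes a b \<beta> lam s :: real
  assumes "a < b" "0 \<le> \<beta>" "0 \<le> lam" "lam \<le> 1" "0 < s" "\<beta> * lam \<le> 1 - \<beta>"
  defines "A \<equiv> a + \<beta> * lam * (b - a)" and "c \<equiv> \<beta> * a + (1 - \<beta>) * b"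
  shows "((\<lambda>x. \<bar>x - A\<bar> * ((x - a) / (b - a)) powr s) has_integral (b - a)\<^sup>2 * c1 \<beta> lam s) {a..c}"
    and "((\<lambda>x. \<bar>x - A\<bar> * ((b - x) / (b - a)) powr s) has_integral (b - a)\<^sup>2 * c2 \<beta> lam s) {a..c}"
    and "((\<lambda>x. \<bar>x - A\<bar> * 1) has_integral (b - a)\<^sup>2 * gamma2 \<beta> lam) {a..c}"
proof -
  have \<mu>: "0 \<le> \<beta> * lam" "\<beta> * lam \<le> 1"
    using assms by (auto simp: mult_le_one)
  have "0 \<le> \<beta> * lam * (b - a)" "0 \<le> \<beta> * (b - a)" "\<beta> * lam * (b - a) \<le> (1 - \<beta>) * (b - a)"
    using assms \<mu> by (auto intro: mult_right_mono)
  then have "a \<le> A" "A \<le> c" "c \<le> b"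
    unfolding A_def c_def by (auto simp: algebra_simps)
  have at_a: "(a - a) / (b - a) = 0" "(b - a) / (b - a) = 1"
    and at_A: "(A - a) / (b - a) = \<beta> * lam" "(b - A) / (b - a) = 1 - \<beta> * lam"
    and at_c: "(c - a) / (b - a) = 1 - \<beta>" "(b - c) / (b - a) = \<beta>"
    using assms by (auto simp: field_simps)
  have "((\<lambda>x. \<bar>x - A\<bar> * ((x - a) / (b - a)) powr s) has_integral
      (b - a)\<^sup>2 * powr_moment s (\<beta> * lam) ((a - a) / (b - a))
      + (b - a)\<^sup>2 * powr_moment s (\<beta> * lam) ((c - a) / (b - a))
      - 2 * ((b - a)\<^sup>2 * powr_moment s (\<beta> * lam) ((A - a) / (b - a)))) {a..c}"
    using has_integral_linear_times_powr[OF \<open>a < b\<close> \<open>0 < s\<close>, of _ _ "\<beta> * lam"]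
    by (intro has_integral_abs_linear_times(1)[OF _ \<open>a \<le> A\<close> \<open>A \<le> c\<close>]) (simp add: A_def)
  then show "((\<lambda>x. \<bar>x - A\<bar> * ((x - a) / (b - a)) powr s) has_integral (b - a)\<^sup>2 * c1 \<beta> lam s) {a..c}"
    unfolding at_a at_A at_c c1_eq_powr_moment[OF \<mu>(1) \<open>0 < s\<close>] by (simp add: algebra_simps)
  have "((\<lambda>x. \<bar>x - A\<bar> * ((b - x) / (b - a)) powr s) has_integral
      (b - a)\<^sup>2 * powr_moment s (1 - \<beta> * lam) ((b - a) / (b - a))
      + (b - a)\<^sup>2 * powr_moment s (1 - \<beta> * lam) ((b - c) / (b - a))
      - 2 * ((b - a)\<^sup>2 * powr_moment s (1 - \<beta> * lam) ((b - A) / (b - a)))) {a..c}"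
    using has_integral_linear_times_powr_reflected[OF \<open>a < b\<close> \<open>0 < s\<close>, of _ _ "\<beta> * lam"] \<open>c \<le> b\<close>
    by (intro has_integral_abs_linear_times(1)[OF _ \<open>a \<le> A\<close> \<open>A \<le> c\<close>]) (simp add: A_def)
  then show "((\<lambda>x. \<bar>x - A\<bar> * ((b - x) / (b - a)) powr s) has_integral (b - a)\<^sup>2 * c2 \<beta> lam s) {a..c}"
    unfolding at_a at_A at_c c2_eq_powr_moment[OF \<mu>(2) \<open>0 < s\<close>] by (simp add: algebra_simps)
  have "((\<lambda>x. \<bar>x - A\<bar> * 1) has_integral
      (a - A)\<^sup>2 / 2 + (c - A)\<^sup>2 / 2 - 2 * ((A - A)\<^sup>2 / 2)) {a..c}"
    by (intro has_integral_abs_linear_times(1)[OF _ \<open>a \<le> A\<close> \<open>A \<le> c\<close>] has_integral_linear)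
  moreover have "(a - A)\<^sup>2 / 2 + (c - A)\<^sup>2 / 2 - 2 * ((A - A)\<^sup>2 / 2) = (b - a)\<^sup>2 * gamma2 \<beta> lam"
    unfolding A_def c_def gamma2_def gamma1_def by (simp add: power2_eq_square field_simps)
  ultimately show "((\<lambda>x. \<bar>x - A\<bar> * 1) has_integral (b - a)\<^sup>2 * gamma2 \<beta> lam) {a..c}"
    by simp
qed

lemma weight_integrals_beyond:
  fixes a b \<beta> lam s :: real
  assumes "a < b" "0 \<le> \<beta>" "\<beta> \<le> 1" "0 < s" "1 - \<beta> \<le> \<beta> * lam"
  defines "A \<equiv> a + \<beta> * lam * (b - a)" and "c \<equiv> \<beta> * a + (1 - \<beta>) * b"
  shows "((\<lambda>x. \<bar>x - A\<bar> * ((x - a) / (b - a)) powr s) has_integral (b - a)\<^sup>2 * c3 \<beta> lam s) {a..c}"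
    and "((\<lambda>x. \<bar>x - A\<bar> * ((b - x) / (b - a)) powr s) has_integral (b - a)\<^sup>2 * c4 \<beta> lam s) {a..c}"
    and "((\<lambda>x. \<bar>x - A\<bar> * 1) has_integral (b - a)\<^sup>2 * gamma1 \<beta> lam) {a..c}"
proof -
  have "0 \<le> (1 - \<beta>) * (b - a)" "0 \<le> \<beta> * (b - a)" "(1 - \<beta>) * (b - a) \<le> \<beta> * lam * (b - a)"
    using assms by (auto intro: mult_right_mono)
  then have "a \<le> c" "c \<le> A" "c \<le> b"
    unfolding A_def c_def by (auto simp: algebra_simps)
  have at_a: "(a - a) / (b - a) = 0" "(b - a) / (b - a) = 1"
    and at_c: "(c - a) / (b - a) = 1 - \<beta>" "(b - c) / (b - a) = \<beta>"
    using assms by (auto simp: field_simps)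
  have "((\<lambda>x. \<bar>x - A\<bar> * ((x - a) / (b - a)) powr s) has_integral
      (b - a)\<^sup>2 * powr_moment s (\<beta> * lam) ((a - a) / (b - a))
      - (b - a)\<^sup>2 * powr_moment s (\<beta> * lam) ((c - a) / (b - a))) {a..c}"
    using has_integral_linear_times_powr[OF \<open>a < b\<close> \<open>0 < s\<close>, of _ _ "\<beta> * lam"]
    by (intro has_integral_abs_linear_times(2)[OF _ \<open>a \<le> c\<close> \<open>c \<le> A\<close>]) (simp add: A_def)
  then show "((\<lambda>x. \<bar>x - A\<bar> * ((x - a) / (b - a)) powr s) has_integral (b - a)\<^sup>2 * c3 \<beta> lam s) {a..c}"
    unfolding at_a at_c c3_eq_powr_moment by (simp add: algebra_simps)
  have "((\<lambda>x. \<bar>x - A\<bar> * ((b - x) / (b - a)) powr s) has_integral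
      (b - a)\<^sup>2 * powr_moment s (1 - \<beta> * lam) ((b - a) / (b - a))
      - (b - a)\<^sup>2 * powr_moment s (1 - \<beta> * lam) ((b - c) / (b - a))) {a..c}"
    using has_integral_linear_times_powr_reflected[OF \<open>a < b\<close> \<open>0 < s\<close>, of _ _ "\<beta> * lam"] \<open>c \<le> b\<close>
    by (intro has_integral_abs_linear_times(2)[OF _ \<open>a \<le> c\<close> \<open>c \<le> A\<close>]) (simp add: A_def)
  then show "((\<lambda>x. \<bar>x - A\<bar> * ((b - x) / (b - a)) powr s) has_integral (b - a)\<^sup>2 * c4 \<beta> lam s) {a..c}"
    unfolding at_a at_c c4_eq_powr_moment by (simp add: algebra_simps)
  have "((\<lambda>x. \<bar>x - A\<bar> * 1) has_integral (a - A)\<^sup>2 / 2 - (c - A)\<^sup>2 / 2) {a..c}"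
    by (intro has_integral_abs_linear_times(2)[OF _ \<open>a \<le> c\<close> \<open>c \<le> A\<close>] has_integral_linear)
  moreover have "(a - A)\<^sup>2 / 2 - (c - A)\<^sup>2 / 2 = (b - a)\<^sup>2 * gamma1 \<beta> lam"
    unfolding A_def c_def gamma1_def by (simp add: power2_eq_square field_simps)
  ultimately show "((\<lambda>x. \<bar>x - A\<bar> * 1) has_integral (b - a)\<^sup>2 * gamma1 \<beta> lam) {a..c}"
    by simp
qed

lemma gamma2_pos:
  assumes "\<beta> < 1"
  shows "0 < gamma2 \<beta> lam"
proof -
  have "gamma2 \<beta> lam = (\<beta> * lam - (1 - \<beta>) / 2)\<^sup>2 + (1 - \<beta>)\<^sup>2 / 4"
    unfolding gamma2_def gamma1_def by (simp add: power2_eq_square field_simps)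
  also have "\<dots> > 0"
    using assms by (intro add_nonneg_pos) auto
  finally show ?thesis .
qed

lemma gamma1_pos:
  assumes "\<beta> < 1" "1 - \<beta> \<le> \<beta> * lam"
  shows "0 < gamma1 \<beta> lam"
  using assms unfolding gamma1_def by simp

lemma abs_integral_linear_times_le:
  fixes g :: "real \<Rightarrow> real"
  assumes "a < b" "a \<le> c" "c \<le> b" "1 \<le> q"
    and g: "g absolutely_integrable_on {a..b}"
    and bound: "\<And>x. x \<in> {a..b} \<Longrightarrow>
      \<bar>g x\<bar> powr q \<le> ((x - a) / (b - a)) powr s * P + ((b - x) / (b - a)) powr s * Q"
    and W: "((\<lambda>x. \<bar>x - A\<bar> * 1) has_integral (b - a)\<^sup>2 * G) {a..c}" "0 < G"
    and WP: "((\<lambda>x. \<bar>x - A\<bar> * ((x - a) / (b - a)) powr s) has_integral (b - a)\<^sup>2 * CP) {a..c}"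
    and WQ: "((\<lambda>x. \<bar>x - A\<bar> * ((b - x) / (b - a)) powr s) has_integral (b - a)\<^sup>2 * CQ) {a..c}"
  shows "\<bar>integral {a..c} (\<lambda>x. (x - A) * g x)\<bar>
    \<le> (b - a)\<^sup>2 * (G powr (1 - 1/q) * (CP * P + CQ * Q) powr (1/q))"
proof -
  define M where "M x = \<bar>x - A\<bar> * ((x - a) / (b - a)) powr s * P + \<bar>x - A\<bar> * ((b - x) / (b - a)) powr s * Q"
    for x
  have gc: "g absolutely_integrable_on {a..c}"
    by (rule absolutely_integrable_on_subinterval[OF g]) (use \<open>c \<le> b\<close> in auto)
  have M: "(M has_integral (b - a)\<^sup>2 * (CP * P + CQ * Q)) {a..c}"
    unfolding M_def distrib_left mult.assoc[symmetric] by (intro has_integral_add has_integral_mult_left WP WQ)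
  have majorant: "\<bar>x - A\<bar> * \<bar>g x\<bar> powr q \<le> M x" if "x \<in> {a..c}" for x
    using mult_left_mono[OF bound, of x "\<bar>x - A\<bar>"] that \<open>c \<le> b\<close> by (auto simp: M_def algebra_simps)
  have "(\<lambda>x. x - A) \<in> borel_measurable (lebesgue_on {a..c})"
    by (intro continuous_imp_measurable_on_sets_lebesgue continuous_intros) auto
  moreover have "g \<in> borel_measurable (lebesgue_on {a..c})"
    by (simp add: absolutely_integrable_imp_borel_measurable[OF gc])
  ultimately have "(\<lambda>x. \<bar>x - A\<bar> * \<bar>g x\<bar> powr q) \<in> borel_measurable (lebesgue_on {a..c})"
    by measurable
  then have "(\<lambda>x. \<bar>x - A\<bar> * \<bar>g x\<bar> powr q) absolutely_integrable_on {a..c}"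
    using majorant M by (intro measurable_bounded_by_integrable_imp_absolutely_integrable[where g = M]) auto
  then have int_q: "(\<lambda>x. \<bar>x - A\<bar> * \<bar>g x\<bar> powr q) integrable_on {a..c}"
    by (simp add: absolutely_integrable_on_def)
  have J: "integral {a..c} (\<lambda>x. \<bar>x - A\<bar> * \<bar>g x\<bar> powr q) \<le> (b - a)\<^sup>2 * (CP * P + CQ * Q)"
    by (rule has_integral_le[OF integrable_integral[OF int_q] M majorant])
  moreover have "0 \<le> integral {a..c} (\<lambda>x. \<bar>x - A\<bar> * \<bar>g x\<bar> powr q)"
    by (intro integral_nonneg int_q) auto
  ultimately have "0 \<le> (b - a)\<^sup>2 * (CP * P + CQ * Q)"
    by linarith
  then have C: "0 \<le> CP * P + CQ * Q"
    using \<open>a < b\<close> by (simp add: zero_le_mult_iff)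
  have "\<bar>integral {a..c} (\<lambda>x. (x - A) * g x)\<bar>
      \<le> ((b - a)\<^sup>2 * G) powr (1 - 1/q) * ((b - a)\<^sup>2 * (CP * P + CQ * Q)) powr (1/q)"
    using W \<open>a < b\<close> by (intro abs_integral_linear_times_power_mean_le gc \<open>1 \<le> q\<close> int_q J) auto
  also have "\<dots> = ((b - a)\<^sup>2) powr (1 - 1/q) * ((b - a)\<^sup>2) powr (1/q)
      * (G powr (1 - 1/q) * (CP * P + CQ * Q) powr (1/q))"
    using W C by (simp add: powr_mult)
  also have "\<dots> = (b - a)\<^sup>2 * (G powr (1 - 1/q) * (CP * P + CQ * Q) powr (1/q))"
    using \<open>a < b\<close> by (simp flip: powr_add)
  finally show ?thesis .
qed

lemma rpow_eq_powr: "0 < x \<Longrightarrow> rpow x e = x powr e"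
  by (simp add: rpow_def)

lemma left_piece_le_inside:
  fixes g :: "real \<Rightarrow> real"
  assumes "a < b" "0 \<le> \<beta>" "\<beta> \<le> 1" "0 \<le> lam" "lam \<le> 1" "0 < s" "1 \<le> q"
    and g: "g absolutely_integrable_on {a..b}"
    and bound: "\<And>x. x \<in> {a..b} \<Longrightarrow>
      \<bar>g x\<bar> powr q \<le> ((x - a) / (b - a)) powr s * P + ((b - x) / (b - a)) powr s * Q"
    and "\<beta> * lam \<le> 1 - \<beta>"
  shows "\<bar>integral {a..\<beta> * a + (1 - \<beta>) * b} (\<lambda>x. (x - (a + \<beta> * lam * (b - a))) * g x)\<bar>
      \<le> (b - a)\<^sup>2 * (rpow (gamma2 \<beta> lam) (1 - 1/q) * (c1 \<beta> lam s * P + c2 \<beta> lam s * Q) powr (1/q))"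
proof (cases "\<beta> = 1")
  case True
  then show ?thesis
    by (simp add: rpow_def)
next
  case False
  then have "0 < gamma2 \<beta> lam"
    using assms by (simp add: gamma2_pos)
  moreover note weights = weight_integrals_inside[OF \<open>a < b\<close> \<open>0 \<le> \<beta>\<close> \<open>0 \<le> lam\<close> \<open>lam \<le> 1\<close> \<open>0 < s\<close>
      \<open>\<beta> * lam \<le> 1 - \<beta>\<close>]
  ultimately show ?thesis
    using abs_integral_linear_times_le[OF \<open>a < b\<close> convex_combination_between \<open>1 \<le> q\<close> g bound
        weights(3) _ weights(1,2)] assms
    by (simp add: rpow_eq_powr)
qed

lemma left_piece_le_beyond:
  fixes g :: "real \<Rightarrow> real"
  assumes "a < b" "0 \<le> \<beta>" "\<beta> \<le> 1" "0 < s" "1 \<le> q"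
    and g: "g absolutely_integrable_on {a..b}"
    and bound: "\<And>x. x \<in> {a..b} \<Longrightarrow>
      \<bar>g x\<bar> powr q \<le> ((x - a) / (b - a)) powr s * P + ((b - x) / (b - a)) powr s * Q"
    and "1 - \<beta> \<le> \<beta> * lam"
  shows "\<bar>integral {a..\<beta> * a + (1 - \<beta>) * b} (\<lambda>x. (x - (a + \<beta> * lam * (b - a))) * g x)\<bar>
      \<le> (b - a)\<^sup>2 * (rpow (gamma1 \<beta> lam) (1 - 1/q) * (c3 \<beta> lam s * P + c4 \<beta> lam s * Q) powr (1/q))"
proof (cases "\<beta> = 1")
  case True
  then show ?thesis
    by (simp add: rpow_def)
next
  case False
  then have "0 < gamma1 \<beta> lam"
    using assms by (simp add: gamma1_pos)
  moreover note weights = weight_integrals_beyond[OF \<open>a < b\<close> \<open>0 \<le> \<beta>\<close> \<open>\<beta> \<le> 1\<close> \<open>0 < s\<close>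
      \<open>1 - \<beta> \<le> \<beta> * lam\<close>]
  ultimately show ?thesis
    using abs_integral_linear_times_le[OF \<open>a < b\<close> convex_combination_between \<open>1 \<le> q\<close> g bound
        weights(3) _ weights(1,2)] assms
    by (simp add: rpow_eq_powr)
qed

lemma integral_right_piece_reflect:
  fixes g :: "real \<Rightarrow> real"
  shows "integral {\<beta> * a + (1 - \<beta>) * b..b} (\<lambda>x. (b - lam * (1 - \<beta>) * (b - a) - x) * g x)
    = integral {- b..(1 - \<beta>) * - b + (1 - (1 - \<beta>)) * - a}
        (\<lambda>y. (y - (- b + (1 - \<beta>) * lam * (- a - - b))) * g (- y))"
proof -
  have "(1 - \<beta>) * - b + (1 - (1 - \<beta>)) * - a = - (\<beta> * a + (1 - \<beta>) * b)"
    by (simp add: algebra_simps)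
  moreover have "(\<lambda>y. (y - (- b + (1 - \<beta>) * lam * (- a - - b))) * g (- y))
      = (\<lambda>y. (\<lambda>x. (b - lam * (1 - \<beta>) * (b - a) - x) * g x) (- y))"
    by (simp add: algebra_simps)
  ultimately show ?thesis
    using Henstock_Kurzweil_Integration.integral_reflect_real[of b "\<beta> * a + (1 - \<beta>) * b"
        "\<lambda>x. (b - lam * (1 - \<beta>) * (b - a) - x) * g x"]
    by (simp only:)
qed

lemma bound_reflect:
  fixes g :: "real \<Rightarrow> real"
  assumes "\<And>x. x \<in> {a..b} \<Longrightarrow>
      \<bar>g x\<bar> powr q \<le> ((x - a) / (b - a)) powr s * P + ((b - x) / (b - a)) powr s * Q"
    and "y \<in> {- b..- a}"
  shows "\<bar>g (- y)\<bar> powr q \<le> ((y - - b) / (- a - - b)) powr s * Q + ((- a - y) / (- a - - b)) powr s * P"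
proof -
  have x: "- y \<in> {a..b}"
    using assms(2) by auto
  have "(- y - a) / (b - a) = (- a - y) / (- a - - b)" "(b - - y) / (b - a) = (y - - b) / (- a - - b)"
    by simp_all
  with assms(1)[OF x] show ?thesis
    by (simp only: add.commute)
qed

lemma right_piece_le_inside:
  fixes g :: "real \<Rightarrow> real"
  assumes "a < b" "0 \<le> \<beta>" "\<beta> \<le> 1" "0 \<le> lam" "lam \<le> 1" "0 < s" "1 \<le> q"
    and g: "g absolutely_integrable_on {a..b}"
    and bound: "\<And>x. x \<in> {a..b} \<Longrightarrow>
      \<bar>g x\<bar> powr q \<le> ((x - a) / (b - a)) powr s * P + ((b - x) / (b - a)) powr s * Q"
    and "lam * (1 - \<beta>) \<le> \<beta>"
  shows "\<bar>integral {\<beta> * a + (1 - \<beta>) * b..b} (\<lambda>x. (b - lam * (1 - \<beta>) * (b - a) - x) * g x)\<bar>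
      \<le> (b - a)\<^sup>2 * (rpow (gamma2 (1 - \<beta>) lam) (1 - 1/q)
          * (c2 (1 - \<beta>) lam s * P + c1 (1 - \<beta>) lam s * Q) powr (1/q))"
proof -
  have "\<bar>integral {- b..(1 - \<beta>) * - b + (1 - (1 - \<beta>)) * - a}
        (\<lambda>y. (y - (- b + (1 - \<beta>) * lam * (- a - - b))) * g (- y))\<bar>
      \<le> (- a - - b)\<^sup>2 * (rpow (gamma2 (1 - \<beta>) lam) (1 - 1/q)
          * (c1 (1 - \<beta>) lam s * Q + c2 (1 - \<beta>) lam s * P) powr (1/q))"
  proof (rule left_piece_le_inside)
    show "(\<lambda>y. g (- y)) absolutely_integrable_on {- b..- a}"
      using g by simp
    show "(1 - \<beta>) * lam \<le> 1 - (1 - \<beta>)"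
      using assms by (simp add: mult.commute)
  qed (use assms bound_reflect[OF bound] in auto)
  then show ?thesis
    by (simp add: integral_right_piece_reflect add.commute)
qed

lemma right_piece_le_beyond:
  fixes g :: "real \<Rightarrow> real"
  assumes "a < b" "0 \<le> \<beta>" "\<beta> \<le> 1" "0 < s" "1 \<le> q"
    and g: "g absolutely_integrable_on {a..b}"
    and bound: "\<And>x. x \<in> {a..b} \<Longrightarrow>
      \<bar>g x\<bar> powr q \<le> ((x - a) / (b - a)) powr s * P + ((b - x) / (b - a)) powr s * Q"
    and "\<beta> \<le> lam * (1 - \<beta>)"
  shows "\<bar>integral {\<beta> * a + (1 - \<beta>) * b..b} (\<lambda>x. (b - lam * (1 - \<beta>) * (b - a) - x) * g x)\<bar>
      \<le> (b - a)\<^sup>2 * (rpow (gamma1 (1 - \<beta>) lam) (1 - 1/q)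
          * (c4 (1 - \<beta>) lam s * P + c3 (1 - \<beta>) lam s * Q) powr (1/q))"
proof -
  have "\<bar>integral {- b..(1 - \<beta>) * - b + (1 - (1 - \<beta>)) * - a}
        (\<lambda>y. (y - (- b + (1 - \<beta>) * lam * (- a - - b))) * g (- y))\<bar>
      \<le> (- a - - b)\<^sup>2 * (rpow (gamma1 (1 - \<beta>) lam) (1 - 1/q)
          * (c3 (1 - \<beta>) lam s * Q + c4 (1 - \<beta>) lam s * P) powr (1/q))"
  proof (rule left_piece_le_beyond)
    show "(\<lambda>y. g (- y)) absolutely_integrable_on {- b..- a}"
      using g by simp
    show "1 - (1 - \<beta>) \<le> (1 - \<beta>) * lam"
      using assms by (simp add: mult.commute)
  qed (use assms bound_reflect[OF bound] in auto)
  then show ?thesis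
    by (simp add: integral_right_piece_reflect add.commute)
qed

theorem theorem2p2:
  fixes I :: "real set" and f f' :: "real \<Rightarrow> real" and a b \<alpha> lam s q :: real
  assumes "is_interval I"
    and "\<forall>x\<in>interior I. (f has_real_derivative f' x) (at x)"
    and "a \<in> interior I" and "b \<in> interior I" and "a < b"
    and "f' absolutely_integrable_on {a..b}"
    and "\<alpha> \<in> {0..1}" and "lam \<in> {0..1}"
    and "0 < s" and "s \<le> 1" and "1 \<le> q"
    and "s_convex_on s (\<lambda>x. \<bar>f' x\<bar> powr q) {a..b}"
  shows
    "(\<alpha> * lam \<le> 1 - \<alpha> \<and> 1 - \<alpha> \<le> 1 - lam * (1 - \<alpha>) \<longrightarrow>
       \<bar>If_fun f lam \<alpha> a b\<bar> \<le> (b - a) *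
         (rpow (gamma2 \<alpha> lam) (1 - 1 / q) *
            (c1 \<alpha> lam s * \<bar>f' b\<bar> powr q + c2 \<alpha> lam s * \<bar>f' a\<bar> powr q) powr (1 / q)
        + rpow (gamma2 (1 - \<alpha>) lam) (1 - 1 / q) *
            (c2 (1 - \<alpha>) lam s * \<bar>f' b\<bar> powr q + c1 (1 - \<alpha>) lam s * \<bar>f' a\<bar> powr q) powr (1 / q)))
   \<and> (\<alpha> * lam \<le> 1 - lam * (1 - \<alpha>) \<and> 1 - lam * (1 - \<alpha>) \<le> 1 - \<alpha> \<longrightarrow>
       \<bar>If_fun f lam \<alpha> a b\<bar> \<le> (b - a) *
         (rpow (gamma2 \<alpha> lam) (1 - 1 / q) *
            (c1 \<alpha> lam s * \<bar>f' b\<bar> powr q + c2 \<alpha> lam s * \<bar>f' a\<bar> powr q) powr (1 / q)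
        + rpow (gamma1 (1 - \<alpha>) lam) (1 - 1 / q) *
            (c4 (1 - \<alpha>) lam s * \<bar>f' b\<bar> powr q + c3 (1 - \<alpha>) lam s * \<bar>f' a\<bar> powr q) powr (1 / q)))
   \<and> (1 - \<alpha> \<le> \<alpha> * lam \<and> \<alpha> * lam \<le> 1 - lam * (1 - \<alpha>) \<longrightarrow>
       \<bar>If_fun f lam \<alpha> a b\<bar> \<le> (b - a) *
         (rpow (gamma1 \<alpha> lam) (1 - 1 / q) *
            (c3 \<alpha> lam s * \<bar>f' b\<bar> powr q + c4 \<alpha> lam s * \<bar>f' a\<bar> powr q) powr (1 / q)
        + rpow (gamma2 (1 - \<alpha>) lam) (1 - 1 / q) *
            (c2 (1 - \<alpha>) lam s * \<bar>f' b\<bar> powr q + c1 (1 - \<alpha>) lam s * \<bar>f' a\<bar> powr q) powr (1 / q)))"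
proof -
  have ab: "a < b" and \<alpha>: "0 \<le> \<alpha>" "\<alpha> \<le> 1" and lam: "0 \<le> lam" "lam \<le> 1"
    using assms by auto
  have "is_interval (interior I)"
    using assms(1) by (metis convex_interior is_interval_convex_1)
  then have sub: "{a..b} \<subseteq> interior I"
    using mem_is_interval_1_I[OF _ assms(3,4)] by auto
  have bound: "\<And>x. x \<in> {a..b} \<Longrightarrow> \<bar>f' x\<bar> powr q
      \<le> ((x - a) / (b - a)) powr s * \<bar>f' b\<bar> powr q + ((b - x) / (b - a)) powr s * \<bar>f' a\<bar> powr q"
    using s_convex_on_le_endpoints[OF assms(12) ab] .
  note pieces =
    left_piece_le_inside[OF ab \<alpha> lam \<open>0 < s\<close> \<open>1 \<le> q\<close> assms(6) bound]
    left_piece_le_beyond[OF ab \<alpha> \<open>0 < s\<close> \<open>1 \<le> q\<close> assms(6) bound]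
    right_piece_le_inside[OF ab \<alpha> lam \<open>0 < s\<close> \<open>1 \<le> q\<close> assms(6) bound]
    right_piece_le_beyond[OF ab \<alpha> \<open>0 < s\<close> \<open>1 \<le> q\<close> assms(6) bound]
  show ?thesis
    unfolding If_fun_eq_pieces[OF ab \<alpha> sub assms(2)]
    by (intro conjI impI abs_diff_divide_le; elim conjE; (rule pieces)?)
      (use ab in \<open>auto simp: algebra_simps\<close>)
qed

end
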